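(* The complex linear span $\mathcal{L}=\{\sum_{l,m=1}^n a^m_l Y^l_m : a^m_l\in\mathbf{C}\}$ is closed under the Lie bracket of vector fields and has dimension $n^2-1$ over $\mathbf{C}$; hence it is an $(n^2-1)$-dimensional Lie algebra.
   Context: Coordinates $x=(x_1,\dots,x_n)\in\mathbf{C}^n$, $n\ge2$, working on the open set $\{u\ne0\}$. Notation: $u=\sum_{j=1}^n x_j$, $D=\sum_{j=1}^n x_j\,\partial/\partial x_j$, and for $l,m\in\{1,\dots,n\}$, $Y^l_m = x_m u^{l-m-1}\big(D-u\,\partial/\partial x_l\big)$. *)

theory Defs
  imports "HOL-Analysis.Analysis" "HOL-Library.Function_Algebras"
begin

text \<open>Points of C^n: functions nat => complex that vanish outside the coordinate
  indices 1..n.  The open set {u ~= 0}.\<close>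
definition Dom :: "nat \<Rightarrow> (nat \<Rightarrow> complex) set" where
  "Dom n = {x. (\<forall>i. i \<notin> {1..n} \<longrightarrow> x i = 0) \<and> (\<Sum>i=1..n. x i) \<noteq> 0}"

text \<open>A (holomorphic) vector field V on Dom n is represented by its coefficient
  functions: V x j is the coefficient of d/dx_j at x, for j in 1..n.  Fields are
  normalised to be 0 outside Dom n and for j outside 1..n.\<close>
type_synonym field = "(nat \<Rightarrow> complex) \<Rightarrow> nat \<Rightarrow> complex"

definition usum :: "nat \<Rightarrow> (nat \<Rightarrow> complex) \<Rightarrow> complex" where
  "usum n x = (\<Sum>i=1..n. x i)"

text \<open>Y^l_m = x_m u^(l-m-1) (D - u d/dx_l); its j-th coefficient is
  x_m u^(l-m-1) (x_j - u [j=l]).\<close>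
definition Yf :: "nat \<Rightarrow> nat \<Rightarrow> nat \<Rightarrow> field" where
  "Yf n l m = (\<lambda>x j. if x \<in> Dom n \<and> j \<in> {1..n}
       then x m * usum n x powi (int l - int m - 1) *
            (x j - (if j = l then usum n x else 0))
       else 0)"

definition pdiff :: "((nat \<Rightarrow> complex) \<Rightarrow> complex) \<Rightarrow> (nat \<Rightarrow> complex) \<Rightarrow> nat \<Rightarrow> complex" where
  "pdiff g x k = deriv (\<lambda>t. g (x(k := x k + t))) 0"

definition lie_bracket :: "nat \<Rightarrow> field \<Rightarrow> field \<Rightarrow> field" where
  "lie_bracket n V W = (\<lambda>x j. if x \<in> Dom n \<and> j \<in> {1..n}
       then (\<Sum>k=1..n. V x k * pdiff (\<lambda>y. W y j) x k - W x k * pdiff (\<lambda>y. V y j) x k)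
       else 0)"

definition Lspan :: "nat \<Rightarrow> field set" where
  "Lspan n = {(\<lambda>x j. \<Sum>l=1..n. \<Sum>m=1..n. a l m * Yf n l m x j) | a :: nat \<Rightarrow> nat \<Rightarrow> complex. True}"

definition fscale :: "complex \<Rightarrow> field \<Rightarrow> field" where
  "fscale c V = (\<lambda>x j. c * V x j)"

end

theory Submission
  imports Defs
begin

text \<open>
  The fields satisfy the commutation relations of the matrix units of \<open>gl(n)\<close>:
  \<open>[Y^l_m, Y^p_q] = [m = p] Y^l_q - [q = l] Y^p_m\<close>.  The computation is short because every
  \<open>Y^p_q\<close> annihilates \<open>u\<close> (as \<open>D u = u\<close>), so when \<open>Y^p_q\<close> differentiates the coefficients of
  \<open>Y^l_m\<close> the powers of \<open>u\<close> behave like constants.  Hence \<open>a \<mapsto> \<Sum> a^m_l Y^l_m\<close> is a Lie algebra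
  homomorphism from \<open>gl(n)\<close> onto \<open>L\<close>, and \<open>L\<close> is closed under the bracket.  Its kernel consists
  of the scalar matrices: \<open>\<Sum>_l Y^l_l = u\<^sup>-\<^sup>1 (u D - u D) = 0\<close>, and conversely evaluating a
  combination at points with \<open>u = 1\<close>, namely the unit vectors \<open>e_k\<close> and \<open>2 e_i - e_n\<close>, shows that
  it vanishes only for scalar \<open>a\<close>.  So the \<open>Y^l_m\<close> with \<open>(l, m) \<noteq> (n, n)\<close> form a basis of \<open>L\<close>,
  which therefore has dimension \<open>n\<^sup>2 - 1\<close>.
\<close>

lemma sum_fun_apply: "(sum f A) x = (\<Sum>i\<in>A. f i x)"
  by (induction A rule: infinite_finite_induct) auto

lemma sum_swap_outermost:
  "(\<Sum>k\<in>K. \<Sum>l\<in>A. \<Sum>m\<in>B. \<Sum>p\<in>C. \<Sum>q\<in>D. F k l m p q)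
    = (\<Sum>l\<in>A. \<Sum>m\<in>B. \<Sum>p\<in>C. \<Sum>q\<in>D. \<Sum>k\<in>K. F k l m p q)"
  by (simp only: sum.swap[where A = K])

lemma sum_gl_structure_constants:
  fixes a b Y :: "'i \<Rightarrow> 'i \<Rightarrow> 'a::comm_ring_1"
  assumes A: "finite A"
  shows "(\<Sum>l\<in>A. \<Sum>m\<in>A. \<Sum>p\<in>A. \<Sum>q\<in>A.
            a l m * b p q * ((if m = p then Y l q else 0) - (if q = l then Y p m else 0)))
    = (\<Sum>l\<in>A. \<Sum>q\<in>A. (\<Sum>m\<in>A. a l m * b m q - b l m * a m q) * Y l q)"
proof -
  have first: "(\<Sum>l\<in>A. \<Sum>m\<in>A. \<Sum>p\<in>A. \<Sum>q\<in>A. a l m * b p q * (if m = p then Y l q else 0))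
     = (\<Sum>l\<in>A. \<Sum>q\<in>A. (\<Sum>m\<in>A. a l m * b m q) * Y l q)"
  proof -
    have "(\<Sum>l\<in>A. \<Sum>m\<in>A. \<Sum>p\<in>A. \<Sum>q\<in>A. a l m * b p q * (if m = p then Y l q else 0))
       = (\<Sum>l\<in>A. \<Sum>m\<in>A. \<Sum>p\<in>A. if m = p then \<Sum>q\<in>A. a l m * b p q * Y l q else 0)"
      by (intro sum.cong refl) auto
    also have "\<dots> = (\<Sum>l\<in>A. \<Sum>m\<in>A. \<Sum>q\<in>A. a l m * b m q * Y l q)"
      using A by (simp add: sum.delta)
    also have "\<dots> = (\<Sum>l\<in>A. \<Sum>q\<in>A. \<Sum>m\<in>A. a l m * b m q * Y l q)"
      by (rule sum.cong[OF refl sum.swap])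
    also have "\<dots> = (\<Sum>l\<in>A. \<Sum>q\<in>A. (\<Sum>m\<in>A. a l m * b m q) * Y l q)"
      by (simp add: sum_distrib_right)
    finally show ?thesis .
  qed
  have second: "(\<Sum>l\<in>A. \<Sum>m\<in>A. \<Sum>p\<in>A. \<Sum>q\<in>A. a l m * b p q * (if q = l then Y p m else 0))
     = (\<Sum>l\<in>A. \<Sum>q\<in>A. (\<Sum>m\<in>A. b l m * a m q) * Y l q)"
  proof -
    have "(\<Sum>l\<in>A. \<Sum>m\<in>A. \<Sum>p\<in>A. \<Sum>q\<in>A. a l m * b p q * (if q = l then Y p m else 0))
       = (\<Sum>l\<in>A. \<Sum>m\<in>A. \<Sum>p\<in>A. a l m * b p l * Y p m)"
      using A by (simp add: if_distrib[of "\<lambda>y. _ * y"] sum.delta' cong: if_cong)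
    also have "\<dots> = (\<Sum>m\<in>A. \<Sum>l\<in>A. \<Sum>p\<in>A. a l m * b p l * Y p m)"
      by (rule sum.swap)
    also have "\<dots> = (\<Sum>m\<in>A. \<Sum>p\<in>A. \<Sum>l\<in>A. a l m * b p l * Y p m)"
      by (rule sum.cong[OF refl sum.swap])
    also have "\<dots> = (\<Sum>p\<in>A. \<Sum>m\<in>A. \<Sum>l\<in>A. b p l * a l m * Y p m)"
      by (subst sum.swap) (simp add: mult_ac)
    finally show ?thesis by (simp add: sum_distrib_right)
  qed
  show ?thesis
    by (simp add: right_diff_distrib left_diff_distrib sum_subtractf first second)
qed

lemma (in vector_space) dim_span_image_eq_card:
  assumes I: "finite I"
    and indep: "\<And>c i. (\<Sum>j\<in>I. scale (c j) (f j)) = 0 \<Longrightarrow> i \<in> I \<Longrightarrow> c i = 0"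
  shows "dim (span (f ` I)) = card I"
proof -
  have inj: "inj_on f I"
  proof (rule inj_onI, rule ccontr)
    fix i j assume i: "i \<in> I" and j: "j \<in> I" and eq: "f i = f j" and ne: "i \<noteq> j"
    define c where "c k = (if k = i then 1 else if k = j then -1 else 0 :: 'a)" for k
    have "(\<Sum>k\<in>I. scale (c k) (f k)) = (\<Sum>k\<in>I. (if k = i then f i else 0) - (if k = j then f j else 0))"
      by (rule sum.cong) (auto simp: c_def ne)
    also have "\<dots> = 0"
      using i j I eq by (simp add: sum_subtractf)
    finally have "c i = 0" using indep i by blast
    then show False by (simp add: c_def)
  qed
  have "independent (f ` I)"
  proof (rule independent_if_scalars_zero)
    show "finite (f ` I)" using I by simp
  next
    fix g v assume sum: "(\<Sum>v\<in>f ` I. scale (g v) v) = 0" and v: "v \<in> f ` I"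
    then obtain i where i: "i \<in> I" "v = f i" by blast
    have "(\<Sum>j\<in>I. scale (g (f j)) (f j)) = 0" using sum by (simp add: sum.reindex[OF inj])
    then show "g v = 0" using indep[of "g \<circ> f"] i by simp
  qed
  then show ?thesis by (simp add: dim_eq_card_independent card_image[OF inj])
qed

section \<open>The fields in coordinates\<close>

definition Ycoeff :: "nat \<Rightarrow> nat \<Rightarrow> nat \<Rightarrow> (nat \<Rightarrow> complex) \<Rightarrow> nat \<Rightarrow> complex" where
  "Ycoeff n l m x j = x m * usum n x powi (int l - int m - 1) * (x j - of_bool (j = l) * usum n x)"

definition dYcoeff :: "nat \<Rightarrow> nat \<Rightarrow> nat \<Rightarrow> (nat \<Rightarrow> complex) \<Rightarrow> nat \<Rightarrow> nat \<Rightarrow> complex" where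
  "dYcoeff n l m x j k =
     of_bool (k = m) * usum n x powi (int l - int m - 1) * (x j - of_bool (j = l) * usum n x)
   + x m * (of_int (int l - int m - 1) * usum n x powi (int l - int m - 2)) * (x j - of_bool (j = l) * usum n x)
   + x m * usum n x powi (int l - int m - 1) * (of_bool (k = j) - of_bool (j = l))"

lemma usum_update: "k \<in> {1..n} \<Longrightarrow> usum n (x(k := x k + t)) = usum n x + t"
  by (simp add: usum_def sum.remove[of _ k])

lemma usum_nonzero: "x \<in> Dom n \<Longrightarrow> usum n x \<noteq> 0"
  by (simp add: Dom_def usum_def)

lemma update_in_Dom:
  "x \<in> Dom n \<Longrightarrow> k \<in> {1..n} \<Longrightarrow> usum n x + t \<noteq> 0 \<Longrightarrow> x(k := x k + t) \<in> Dom n"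
  using usum_update[of k n x t] by (auto simp: Dom_def usum_def)

lemma Yf_eq_Ycoeff: "x \<in> Dom n \<Longrightarrow> j \<in> {1..n} \<Longrightarrow> Yf n l m x j = Ycoeff n l m x j"
  by (simp add: Yf_def Ycoeff_def)

lemma Yf_outside: "\<not> (x \<in> Dom n \<and> j \<in> {1..n}) \<Longrightarrow> Yf n l m x j = 0"
  by (auto simp: Yf_def)

lemma has_field_derivative_Yf:
  assumes x: "x \<in> Dom n" and k: "k \<in> {1..n}" and j: "j \<in> {1..n}"
  shows "((\<lambda>t. Yf n l m (x(k := x k + t)) j) has_field_derivative dYcoeff n l m x j k) (at 0)"
proof -
  define U where "U = usum n x"
  define g where "g t = (x m + of_bool (m = k) * t) * (U + t) powi (int l - int m - 1)
      * (x j + of_bool (k = j) * t - of_bool (j = l) * (U + t))" for t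
  have g: "(g has_field_derivative dYcoeff n l m x j k) (at 0)"
    unfolding g_def
    by (rule derivative_eq_intros refl | simp add: U_def usum_nonzero[OF x])+
      (simp add: dYcoeff_def U_def algebra_simps)
  have agree: "g t = Yf n l m (x(k := x k + t)) j" if "t \<in> - {- U}" for t
  proof -
    from that have "U + t \<noteq> 0" by (auto simp: add_eq_0_iff)
    then have "x(k := x k + t) \<in> Dom n" using update_in_Dom[OF x k] by (simp add: U_def)
    then show ?thesis
      by (auto simp: Yf_eq_Ycoeff[OF _ j] Ycoeff_def g_def usum_update[OF k] U_def)
  qed
  have zero: "0 \<in> - {- U}" using usum_nonzero[OF x] by (simp add: U_def)
  show ?thesis
    by (rule has_field_derivative_transform_within_open[OF g open_Compl[OF closed_singleton] zero agree])
qed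

definition Ycomb :: "nat \<Rightarrow> (nat \<Rightarrow> nat \<Rightarrow> complex) \<Rightarrow> field" where
  "Ycomb n a = (\<lambda>x j. \<Sum>l=1..n. \<Sum>m=1..n. a l m * Yf n l m x j)"

lemma Lspan_eq_range: "Lspan n = range (Ycomb n)"
  unfolding Lspan_def Ycomb_def by auto

lemma pdiff_Ycomb:
  assumes "x \<in> Dom n" "k \<in> {1..n}" "j \<in> {1..n}"
  shows "pdiff (\<lambda>y. Ycomb n a y j) x k = (\<Sum>l=1..n. \<Sum>m=1..n. a l m * dYcoeff n l m x j k)"
  unfolding pdiff_def Ycomb_def
  by (intro DERIV_imp_deriv DERIV_sum DERIV_cmult has_field_derivative_Yf assms)

section \<open>The commutation relations\<close>

text \<open>That is, \<open>Y^p_q u = 0\<close>.\<close>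

lemma sum_Ycoeff_eq_0:
  assumes "p \<in> {1..n}" shows "(\<Sum>k=1..n. Ycoeff n p q x k) = 0"
proof -
  have "(\<Sum>k=1..n. x k - of_bool (k = p) * usum n x) = 0"
    using assms by (simp add: sum_subtractf usum_def)
  then show ?thesis by (simp add: Ycoeff_def flip: sum_distrib_left)
qed

lemma sum_Ycoeff_mult_dYcoeff:
  assumes "p \<in> {1..n}" "m \<in> {1..n}" "j \<in> {1..n}"
  shows "(\<Sum>k=1..n. Ycoeff n p q x k * dYcoeff n l m x j k)
     = Ycoeff n p q x m * usum n x powi (int l - int m - 1) * (x j - of_bool (j = l) * usum n x)
       + x m * usum n x powi (int l - int m - 1) * Ycoeff n p q x j"
proof -
  define v where "v = Ycoeff n p q x"
  define A where "A = usum n x powi (int l - int m - 1) * (x j - of_bool (j = l) * usum n x)"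
  define B where "B = x m * (of_int (int l - int m - 1) * usum n x powi (int l - int m - 2))
      * (x j - of_bool (j = l) * usum n x)"
  define C where "C = x m * usum n x powi (int l - int m - 1)"
  have "(\<Sum>k=1..n. v k * dYcoeff n l m x j k)
      = (\<Sum>k=1..n. of_bool (k = m) * (v k * A) + v k * B + of_bool (k = j) * (C * v k)
          - C * of_bool (j = l) * v k)"
    unfolding dYcoeff_def A_def B_def C_def by (simp add: algebra_simps)
  also have "\<dots> = v m * A + sum v {1..n} * B + C * v j - C * of_bool (j = l) * sum v {1..n}"
    unfolding sum.distrib sum_subtractf sum_distrib_left sum_distrib_right
    using assms by simp
  finally show ?thesis
    using sum_Ycoeff_eq_0[OF assms(1)] by (simp add: v_def A_def C_def mult.assoc)
qed

lemma Ycoeff_bracket: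
  assumes x: "x \<in> Dom n" and "l \<in> {1..n}" "m \<in> {1..n}" "p \<in> {1..n}" "q \<in> {1..n}" "j \<in> {1..n}"
  shows "(\<Sum>k=1..n. Ycoeff n l m x k * dYcoeff n p q x j k - Ycoeff n p q x k * dYcoeff n l m x j k)
    = (if m = p then Ycoeff n l q x j else 0) - (if q = l then Ycoeff n p m x j else 0)"
proof -
  define U where "U = usum n x"
  define P where "P = U * U powi (int l - int m - 1) * U powi (int p - int q - 1)"
  have expand: "(\<Sum>k=1..n. Ycoeff n l m x k * dYcoeff n p q x j k - Ycoeff n p q x k * dYcoeff n l m x j k)
      = of_bool (m = p) * P * x q * (x j - of_bool (j = l) * U)
        - of_bool (q = l) * P * x m * (x j - of_bool (j = p) * U)"
    unfolding sum_subtractf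
    using assms by (simp only: sum_Ycoeff_mult_dYcoeff) (simp add: Ycoeff_def P_def algebra_simps flip: U_def)
  have P: "P = U powi (1 + (int l - int m - 1) + (int p - int q - 1))"
    unfolding P_def U_def
    by (simp only: power_int_add[OF disjI1[OF usum_nonzero[OF x]]] power_int_1_right)
  have P_mp: "P = U powi (int l - int q - 1)" if "m = p"
  proof -
    have "1 + (int l - int m - 1) + (int p - int q - 1) = int l - int q - 1"
      using that by linarith
    then show ?thesis by (simp only: P)
  qed
  have P_ql: "P = U powi (int p - int m - 1)" if "q = l"
  proof -
    have "1 + (int l - int m - 1) + (int p - int q - 1) = int p - int m - 1"
      using that by linarith
    then show ?thesis by (simp only: P)
  qed
  show ?thesis
    unfolding expand by (cases "m = p"; cases "q = l") (simp_all add: Ycoeff_def U_def P_mp P_ql)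
qed

lemma lie_bracket_Ycomb_expand:
  assumes x: "x \<in> Dom n" and j: "j \<in> {1..n}"
  shows "lie_bracket n (Ycomb n a) (Ycomb n b) x j
    = (\<Sum>l=1..n. \<Sum>m=1..n. \<Sum>p=1..n. \<Sum>q=1..n. a l m * b p q *
        (\<Sum>k=1..n. Ycoeff n l m x k * dYcoeff n p q x j k - Ycoeff n p q x k * dYcoeff n l m x j k))"
proof -
  let ?I = "{1..n}"
  have summand: "Ycomb n a x k * pdiff (\<lambda>y. Ycomb n b y j) x k - Ycomb n b x k * pdiff (\<lambda>y. Ycomb n a y j) x k
     = (\<Sum>l\<in>?I. \<Sum>m\<in>?I. \<Sum>p\<in>?I. \<Sum>q\<in>?I. a l m * b p q *
         (Ycoeff n l m x k * dYcoeff n p q x j k - Ycoeff n p q x k * dYcoeff n l m x j k))"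
    if k: "k \<in> ?I" for k
  proof -
    have "Ycomb n c x k = (\<Sum>l\<in>?I. \<Sum>m\<in>?I. c l m * Ycoeff n l m x k)" for c
      using x k by (simp add: Ycomb_def Yf_eq_Ycoeff)
    then have "Ycomb n a x k * pdiff (\<lambda>y. Ycomb n b y j) x k - Ycomb n b x k * pdiff (\<lambda>y. Ycomb n a y j) x k
      = (\<Sum>l\<in>?I. \<Sum>m\<in>?I. a l m * Ycoeff n l m x k) * (\<Sum>p\<in>?I. \<Sum>q\<in>?I. b p q * dYcoeff n p q x j k)
        - (\<Sum>l\<in>?I. \<Sum>m\<in>?I. a l m * dYcoeff n l m x j k) * (\<Sum>p\<in>?I. \<Sum>q\<in>?I. b p q * Ycoeff n p q x k)"
      using x k j by (simp add: pdiff_Ycomb mult.commute)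
    also have "\<dots> = (\<Sum>l\<in>?I. \<Sum>m\<in>?I. \<Sum>p\<in>?I. \<Sum>q\<in>?I. a l m * b p q *
         (Ycoeff n l m x k * dYcoeff n p q x j k - Ycoeff n p q x k * dYcoeff n l m x j k))"
      unfolding sum_distrib_right unfolding sum_distrib_left sum_subtractf[symmetric]
      by (simp add: algebra_simps)
    finally show ?thesis .
  qed
  have "lie_bracket n (Ycomb n a) (Ycomb n b) x j
     = (\<Sum>k\<in>?I. \<Sum>l\<in>?I. \<Sum>m\<in>?I. \<Sum>p\<in>?I. \<Sum>q\<in>?I. a l m * b p q *
         (Ycoeff n l m x k * dYcoeff n p q x j k - Ycoeff n p q x k * dYcoeff n l m x j k))"
    using x j by (simp add: lie_bracket_def summand)
  also have "\<dots> = (\<Sum>l\<in>?I. \<Sum>m\<in>?I. \<Sum>p\<in>?I. \<Sum>q\<in>?I. \<Sum>k\<in>?I. a l m * b p q *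
         (Ycoeff n l m x k * dYcoeff n p q x j k - Ycoeff n p q x k * dYcoeff n l m x j k))"
    by (rule sum_swap_outermost)
  finally show ?thesis
    by (simp only: sum_distrib_left)
qed

lemma lie_bracket_Ycomb:
  "lie_bracket n (Ycomb n a) (Ycomb n b) = Ycomb n (\<lambda>l q. \<Sum>m=1..n. a l m * b m q - b l m * a m q)"
proof (intro ext)
  fix x j
  show "lie_bracket n (Ycomb n a) (Ycomb n b) x j
      = Ycomb n (\<lambda>l q. \<Sum>m=1..n. a l m * b m q - b l m * a m q) x j"
  proof (cases "x \<in> Dom n \<and> j \<in> {1..n}")
    case False
    then show ?thesis
      unfolding lie_bracket_def Ycomb_def if_not_P[OF False] Yf_outside[OF False] by simp
  next
    case True
    then have x: "x \<in> Dom n" and j: "j \<in> {1..n}" by auto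
    have "lie_bracket n (Ycomb n a) (Ycomb n b) x j
      = (\<Sum>l=1..n. \<Sum>m=1..n. \<Sum>p=1..n. \<Sum>q=1..n. a l m * b p q *
          ((if m = p then Ycoeff n l q x j else 0) - (if q = l then Ycoeff n p m x j else 0)))"
      unfolding lie_bracket_Ycomb_expand[OF x j]
      by (intro sum.cong refl) (simp only: Ycoeff_bracket[OF x _ _ _ _ j])
    also have "\<dots> = (\<Sum>l=1..n. \<Sum>q=1..n. (\<Sum>m=1..n. a l m * b m q - b l m * a m q) * Ycoeff n l q x j)"
      by (simp add: sum_gl_structure_constants)
    also have "\<dots> = Ycomb n (\<lambda>l q. \<Sum>m=1..n. a l m * b m q - b l m * a m q) x j"
      using x j by (simp add: Ycomb_def Yf_eq_Ycoeff)
    finally show ?thesis .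
  qed
qed

section \<open>Combinations that vanish\<close>

lemma Dom_if_usum_eq_1: "(\<And>i. i \<notin> {1..n} \<Longrightarrow> x i = 0) \<Longrightarrow> usum n x = 1 \<Longrightarrow> x \<in> Dom n"
  by (simp add: Dom_def usum_def)

lemma Ycomb_at_usum_eq_1:
  assumes "x \<in> Dom n" "usum n x = 1" "j \<in> {1..n}"
  shows "Ycomb n a x j = x j * (\<Sum>l=1..n. \<Sum>m=1..n. a l m * x m) - (\<Sum>m=1..n. a j m * x m)"
proof -
  have "Ycomb n a x j = (\<Sum>l=1..n. \<Sum>m=1..n. x j * (a l m * x m) - of_bool (j = l) * (a l m * x m))"
    using assms by (simp add: Ycomb_def Yf_eq_Ycoeff Ycoeff_def algebra_simps)
  also have "\<dots> = x j * (\<Sum>l=1..n. \<Sum>m=1..n. a l m * x m) - (\<Sum>l=1..n. of_bool (j = l) * (\<Sum>m=1..n. a l m * x m))"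
    by (simp add: sum_subtractf sum_distrib_left)
  also have "\<dots> = x j * (\<Sum>l=1..n. \<Sum>m=1..n. a l m * x m) - (\<Sum>m=1..n. a j m * x m)"
    using assms(3) by simp
  finally show ?thesis .
qed

lemma Ycomb_eq_0_imp_off_diagonal:
  assumes "Ycomb n a = 0" "i \<in> {1..n}" "k \<in> {1..n}" "i \<noteq> k"
  shows "a i k = 0"
proof -
  define e where "e t = (of_bool (t = k) :: complex)" for t
  have "e \<in> Dom n" "usum n e = 1"
    using assms by (auto simp: e_def usum_def intro!: Dom_if_usum_eq_1)
  then have "Ycomb n a e i = - a i k"
    using assms(2-4) by (simp add: Ycomb_at_usum_eq_1 e_def)
  with assms(1) show ?thesis by simp
qed

lemma Ycomb_eq_0_imp_diagonal_eq:
  assumes zero: "Ycomb n a = 0" and i: "i \<in> {1..n}"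
  shows "a i i = a n n"
proof (cases "i = n")
  case False
  have n: "n \<in> {1..n}" using i by simp
  have diagonal: "(\<Sum>m=1..n. a l m * z m) = a l l * z l" if "l \<in> {1..n}" for l z
  proof -
    have "(\<Sum>m=1..n. a l m * z m) = (\<Sum>m=1..n. of_bool (m = l) * (a l l * z l))"
      using Ycomb_eq_0_imp_off_diagonal[OF zero that] by (intro sum.cong refl) auto
    with that show ?thesis by simp
  qed
  define z where "z t = 2 * of_bool (t = i) - (of_bool (t = n) :: complex)" for t
  have z: "z \<in> Dom n" "usum n z = 1"
    using i n by (auto simp: z_def usum_def sum_subtractf sum_distrib_left[symmetric] intro!: Dom_if_usum_eq_1)
  have "(\<Sum>l=1..n. \<Sum>m=1..n. a l m * z m) = (\<Sum>l=1..n. a l l * z l)"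
    by (intro sum.cong refl) (rule diagonal)
  also have "\<dots> = 2 * a i i - a n n"
    using i n False
    by (simp add: z_def right_diff_distrib sum_subtractf mult.left_commute[of _ 2] flip: sum_distrib_left)
  finally have all_rows: "(\<Sum>l=1..n. \<Sum>m=1..n. a l m * z m) = 2 * a i i - a n n" .
  have row_i: "(\<Sum>m=1..n. a i m * z m) = 2 * a i i"
    using diagonal[OF i] False by (simp add: z_def)
  have "z i = 2"
    using False by (simp add: z_def)
  then have "Ycomb n a z i = 2 * (2 * a i i - a n n) - 2 * a i i"
    unfolding Ycomb_at_usum_eq_1[OF z i] all_rows row_i by simp
  with zero show ?thesis by simp
qed simp

lemma Ycomb_eq_0_imp_scalar:
  assumes "Ycomb n a = 0" "i \<in> {1..n}" "k \<in> {1..n}"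
  shows "a i k = of_bool (i = k) * a n n"
  using Ycomb_eq_0_imp_off_diagonal[OF assms] Ycomb_eq_0_imp_diagonal_eq[OF assms(1,2)]
  by (cases "i = k") auto

lemma sum_Yf_diagonal: "(\<Sum>l=1..n. Yf n l l x j) = 0"
proof (cases "x \<in> Dom n \<and> j \<in> {1..n}")
  case True
  define U where "U = usum n x"
  have "(\<Sum>l=1..n. Yf n l l x j) = (\<Sum>l=1..n. U powi -1 * x j * x l - of_bool (l = j) * (U powi -1 * U * x j))"
    using True by (intro sum.cong refl) (auto simp: Yf_eq_Ycoeff Ycoeff_def U_def algebra_simps)
  also have "\<dots> = U powi -1 * x j * U - U powi -1 * U * x j"
    using True by (simp add: sum_subtractf U_def usum_def flip: sum_distrib_left)
  finally show ?thesis by simp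
qed (auto simp: Yf_outside)

lemma Ycomb_add_scalar: "Ycomb n (\<lambda>l m. a l m + c * of_bool (l = m)) = Ycomb n a"
proof (intro ext)
  fix x j
  have diagonal: "(\<Sum>m=1..n. of_bool (l = m) * (c * Yf n l m x j)) = c * Yf n l l x j"
    if "l \<in> {1..n}" for l
    using that by simp
  have "Ycomb n (\<lambda>l m. a l m + c * of_bool (l = m)) x j
      = (\<Sum>l=1..n. \<Sum>m=1..n. a l m * Yf n l m x j + of_bool (l = m) * (c * Yf n l m x j))"
    unfolding Ycomb_def by (intro sum.cong refl) (simp add: algebra_simps)
  also have "\<dots> = Ycomb n a x j + c * (\<Sum>l=1..n. Yf n l l x j)"
    unfolding Ycomb_def sum.distrib sum_distrib_left
    by (intro arg_cong2[where f = "(+)"] refl sum.cong diagonal)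
  also have "\<dots> = Ycomb n a x j"
    using sum_Yf_diagonal[of n x j] by simp
  finally show "Ycomb n (\<lambda>l m. a l m + c * of_bool (l = m)) x j = Ycomb n a x j" .
qed

section \<open>A basis of L\<close>

interpretation vf: vector_space fscale
  by unfold_locales (auto simp: fscale_def fun_eq_iff algebra_simps)

definition Yindex :: "nat \<Rightarrow> (nat \<times> nat) set" where
  "Yindex n = {1..n} \<times> {1..n} - {(n, n)}"

lemma card_Yindex: "n \<ge> 1 \<Longrightarrow> card (Yindex n) = n\<^sup>2 - 1"
  by (simp add: Yindex_def card_Diff_singleton power2_eq_square)

lemma Ycomb_eq_sum_Yindex:
  assumes "a n n = 0"
  shows "Ycomb n a = (\<Sum>(l, m)\<in>Yindex n. fscale (a l m) (Yf n l m))"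
proof (intro ext)
  fix x j
  have "Ycomb n a x j = (\<Sum>(l, m)\<in>{1..n} \<times> {1..n}. a l m * Yf n l m x j)"
    by (simp add: Ycomb_def sum.cartesian_product)
  also have "\<dots> = (\<Sum>(l, m)\<in>Yindex n. a l m * Yf n l m x j)"
    using assms by (intro sum.mono_neutral_right) (auto simp: Yindex_def)
  also have "\<dots> = (\<Sum>(l, m)\<in>Yindex n. fscale (a l m) (Yf n l m)) x j"
    by (simp add: sum_fun_apply fscale_def case_prod_beta)
  finally show "Ycomb n a x j = (\<Sum>(l, m)\<in>Yindex n. fscale (a l m) (Yf n l m)) x j" .
qed

lemma subspace_Lspan: "vf.subspace (Lspan n)"
  unfolding vf.subspace_def Lspan_eq_range
proof (intro conjI ballI allI)
  have "0 = Ycomb n (\<lambda>l m. 0)"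
    by (simp add: Ycomb_def fun_eq_iff)
  then show "0 \<in> range (Ycomb n)" by (metis rangeI)
next
  have "Ycomb n a + Ycomb n b = Ycomb n (\<lambda>l m. a l m + b l m)" for a b
    by (simp add: Ycomb_def fun_eq_iff sum.distrib distrib_right)
  then show "V + W \<in> range (Ycomb n)" if "V \<in> range (Ycomb n)" "W \<in> range (Ycomb n)" for V W
    using that by auto
next
  have "fscale c (Ycomb n a) = Ycomb n (\<lambda>l m. c * a l m)" for c a
    by (simp add: Ycomb_def fscale_def fun_eq_iff sum_distrib_left mult.assoc)
  then show "fscale c V \<in> range (Ycomb n)" if "V \<in> range (Ycomb n)" for c V
    using that by auto
qed

lemma Ycomb_matrix_unit:
  assumes "l \<in> {1..n}" "m \<in> {1..n}"
  shows "Ycomb n (\<lambda>i k. of_bool (i = l) * of_bool (k = m)) = Yf n l m"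
proof (intro ext)
  fix x j
  have "(\<Sum>k=1..n. of_bool (i = l) * of_bool (k = m) * Yf n i k x j) = of_bool (i = l) * Yf n i m x j" for i
    using assms(2) by (simp add: mult.assoc flip: sum_distrib_left)
  then show "Ycomb n (\<lambda>i k. of_bool (i = l) * of_bool (k = m)) x j = Yf n l m x j"
    using assms(1) by (simp add: Ycomb_def)
qed

lemma Lspan_eq_span: "Lspan n = vf.span (case_prod (Yf n) ` Yindex n)"
proof
  have "Yf n l m \<in> Lspan n" if "l \<in> {1..n}" "m \<in> {1..n}" for l m
    unfolding Lspan_eq_range using Ycomb_matrix_unit[OF that] by (metis rangeI)
  then have "case_prod (Yf n) ` Yindex n \<subseteq> Lspan n"
    by (auto simp: Yindex_def)
  then show "vf.span (case_prod (Yf n) ` Yindex n) \<subseteq> Lspan n"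
    by (rule vf.span_minimal[OF _ subspace_Lspan])
next
  show "Lspan n \<subseteq> vf.span (case_prod (Yf n) ` Yindex n)"
  proof
    fix V assume "V \<in> Lspan n"
    then obtain a where "V = Ycomb n a" unfolding Lspan_eq_range by blast
    also have "\<dots> = Ycomb n (\<lambda>l m. a l m + - a n n * of_bool (l = m))"
      by (rule Ycomb_add_scalar[symmetric])
    also have "\<dots> = (\<Sum>(l, m)\<in>Yindex n. fscale (a l m + - a n n * of_bool (l = m)) (Yf n l m))"
      by (rule Ycomb_eq_sum_Yindex) simp
    moreover have "Yf n l m \<in> vf.span (case_prod (Yf n) ` Yindex n)" if "(l, m) \<in> Yindex n" for l m
      using that by (intro vf.span_base image_eqI[where x = "(l, m)"]) auto
    ultimately show "V \<in> vf.span (case_prod (Yf n) ` Yindex n)"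
      by (auto intro!: vf.span_sum vf.span_scale)
  qed
qed

lemma Yf_Yindex_independent:
  assumes "(\<Sum>lm\<in>Yindex n. fscale (c lm) (case_prod (Yf n) lm)) = 0" and "lm \<in> Yindex n"
  shows "c lm = 0"
proof -
  define a where "a l m = (if (l, m) \<in> Yindex n then c (l, m) else 0)" for l m
  have "Ycomb n a = (\<Sum>(l, m)\<in>Yindex n. fscale (a l m) (Yf n l m))"
    by (rule Ycomb_eq_sum_Yindex) (simp add: a_def Yindex_def)
  also have "\<dots> = (\<Sum>lm\<in>Yindex n. fscale (c lm) (case_prod (Yf n) lm))"
    by (intro sum.cong refl) (auto simp: a_def)
  finally have "Ycomb n a = 0" using assms(1) by simp
  moreover obtain l m where lm: "lm = (l, m)" by (cases lm)
  moreover have "l \<in> {1..n}" "m \<in> {1..n}" "(l, m) \<noteq> (n, n)"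
    using assms(2) by (auto simp: lm Yindex_def)
  ultimately show ?thesis
    using Ycomb_eq_0_imp_scalar[of n a l m] by (auto simp: a_def Yindex_def)
qed

theorem theorem2:
  fixes n :: nat
  assumes "n \<ge> 2"
  shows "(\<forall>V\<in>Lspan n. \<forall>W\<in>Lspan n. lie_bracket n V W \<in> Lspan n)
         \<and> vector_space.dim fscale (Lspan n) = n^2 - 1"
proof
  show "\<forall>V\<in>Lspan n. \<forall>W\<in>Lspan n. lie_bracket n V W \<in> Lspan n"
    unfolding Lspan_eq_range by (auto simp: lie_bracket_Ycomb)
  have "vector_space.dim fscale (Lspan n) = card (Yindex n)"
    unfolding Lspan_eq_span
    by (rule vf.dim_span_image_eq_card) (auto simp: Yindex_def intro: Yf_Yindex_independent)
  then show "vector_space.dim fscale (Lspan n) = n^2 - 1"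
    using card_Yindex assms by simp
qed

end
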